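(* Let $\mathcal V$ be an operator space and $\mathcal D$ a bounded noncommutative domain in $\mathcal V_{\rm nc}$, and let $n\in\mathbb N$. On any subset $A\subseteq\mathcal D_n$ which is at positive norm-distance from $\mathcal V^{n\times n}\setminus\mathcal D_n$, the topologies induced by $\tilde d_{\mathcal D}$ and by the norm of $\mathcal V^{n\times n}$ coincide.
   Context: A noncommutative domain is a family of open sets $\mathcal D_n\subseteq\mathcal V^{n\times n}$ closed under direct sums $\begin{bmatrix}a&0\\0&c\end{bmatrix}$; bounded means there is $M<\infty$ with $\|x\|\le M$ for all $x\in\mathcal D_k$, all $k$. For $a\in\mathcal D_n,c\in\mathcal D_m,b\in\mathcal V^{n\times m}$, $\delta_{\mathcal D}(a,c)(b)=\big[\sup\{t\in[0,+\infty]\colon\begin{bmatrix}a&sb\\0&c\end{bmatrix}\in\mathcal D_{n+m}\ \forall s\in[0,t]\}\big]^{-1}$ ($1/0=+\infty,1/\infty=0$), $\tilde\delta_{\mathcal D}(a,c)=\delta_{\mathcal D}(a,c)(a-c)$, and $\tilde d_{\mathcal D}(a,c)=\inf\{\sum_{j=1}^N\tilde\delta_{\mathcal D}(a_{j-1},a_j)\colon N\in\mathbb N,\ a_0=a,a_N=c,\ a_j\in\mathcal D_n\}$. *)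

theory Defs
  imports Complex_Main "HOL-Library.Extended_Real"
begin

text \<open>Matrices over a vector space V are modelled as functions nat => nat => V;
  an n x m matrix is one whose entries outside {0..<n} x {0..<m} vanish.\<close>

type_synonym 'v mat = "nat \<Rightarrow> nat \<Rightarrow> 'v"

definition is_mat :: "nat \<Rightarrow> nat \<Rightarrow> ('v::zero) mat \<Rightarrow> bool" where
  "is_mat n m x \<longleftrightarrow> (\<forall>i j. (n \<le> i \<or> m \<le> j) \<longrightarrow> x i j = 0)"

definition mat_diff :: "('v::ab_group_add) mat \<Rightarrow> 'v mat \<Rightarrow> 'v mat" where
  "mat_diff x y = (\<lambda>i j. x i j - y i j)"

definition mat_scale :: "(complex \<Rightarrow> 'v \<Rightarrow> 'v) \<Rightarrow> complex \<Rightarrow> 'v mat \<Rightarrow> 'v mat" where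
  "mat_scale sc c x = (\<lambda>i j. sc c (x i j))"

definition blk :: "nat \<Rightarrow> nat \<Rightarrow> ('v::zero) mat \<Rightarrow> 'v mat \<Rightarrow> 'v mat \<Rightarrow> 'v mat" where
  "blk n m a b c = (\<lambda>i j. if i < n then (if j < n then a i j else b i (j - n))
                          else (if j < n then 0 else c (i - n) (j - n)))"

definition dsum :: "nat \<Rightarrow> nat \<Rightarrow> ('v::zero) mat \<Rightarrow> 'v mat \<Rightarrow> 'v mat" where
  "dsum n m a c = blk n m a (\<lambda>_ _. 0) c"

definition cmat_norm :: "nat \<Rightarrow> nat \<Rightarrow> complex mat \<Rightarrow> real" where
  "cmat_norm m n \<alpha> = Sup {sqrt (\<Sum>i<m. (cmod (\<Sum>k<n. \<alpha> i k * \<xi> k))\<^sup>2) | \<xi>.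
                              (\<Sum>k<n. (cmod (\<xi> k))\<^sup>2) \<le> 1}"

definition mat_sandwich :: "(complex \<Rightarrow> 'v \<Rightarrow> 'v) \<Rightarrow> nat \<Rightarrow> nat \<Rightarrow> complex mat \<Rightarrow> ('v::ab_group_add) mat
                            \<Rightarrow> complex mat \<Rightarrow> 'v mat" where
  "mat_sandwich sc m n \<alpha> x \<beta> = (\<lambda>i j. if i < m \<and> j < m
      then (\<Sum>k<n. \<Sum>l<n. sc (\<alpha> i k * \<beta> l j) (x k l)) else 0)"

text \<open>Abstract operator space (Ruan's axioms): a complex vector space V (scalar
  multiplication sc) with a norm nrm n on each V^{n x n}, n >= 1, such that
  ||x (+) y|| = max ||x|| ||y|| and ||alpha x beta|| <= ||alpha|| ||x|| ||beta||.\<close>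
definition operator_space :: "(complex \<Rightarrow> ('v::ab_group_add) \<Rightarrow> 'v) \<Rightarrow> (nat \<Rightarrow> 'v mat \<Rightarrow> real) \<Rightarrow> bool" where
  "operator_space sc nrm \<longleftrightarrow>
     vector_space sc \<and>
     (\<forall>n\<ge>1. \<forall>x. is_mat n n x \<longrightarrow> 0 \<le> nrm n x \<and> (nrm n x = 0 \<longleftrightarrow> x = (\<lambda>_ _. 0))) \<and>
     (\<forall>n\<ge>1. \<forall>x y. is_mat n n x \<longrightarrow> is_mat n n y \<longrightarrow>
         nrm n (\<lambda>i j. x i j + y i j) \<le> nrm n x + nrm n y) \<and>
     (\<forall>n\<ge>1. \<forall>c x. is_mat n n x \<longrightarrow> nrm n (mat_scale sc c x) = cmod c * nrm n x) \<and>
     (\<forall>n\<ge>1. \<forall>m\<ge>1. \<forall>x y. is_mat n n x \<longrightarrow> is_mat m m y \<longrightarrow>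
         nrm (n + m) (dsum n m x y) = max (nrm n x) (nrm m y)) \<and>
     (\<forall>n\<ge>1. \<forall>m\<ge>1. \<forall>\<alpha> x \<beta>. is_mat m n \<alpha> \<longrightarrow> is_mat n n x \<longrightarrow> is_mat n m \<beta> \<longrightarrow>
         nrm m (mat_sandwich sc m n \<alpha> x \<beta>) \<le> cmat_norm m n \<alpha> * nrm n x * cmat_norm n m \<beta>)"

definition nc_domain :: "(nat \<Rightarrow> ('v::ab_group_add) mat \<Rightarrow> real) \<Rightarrow> (nat \<Rightarrow> 'v mat set) \<Rightarrow> bool" where
  "nc_domain nrm D \<longleftrightarrow>
     (\<forall>n. D n \<subseteq> {x. is_mat n n x}) \<and>
     (\<forall>n\<ge>1. \<forall>x\<in>D n. \<exists>e>0. \<forall>y. is_mat n n y \<and> nrm n (mat_diff y x) < e \<longrightarrow> y \<in> D n) \<and>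
     (\<forall>n\<ge>1. \<forall>m\<ge>1. \<forall>a\<in>D n. \<forall>c\<in>D m. dsum n m a c \<in> D (n + m))"

definition bounded_nc :: "(nat \<Rightarrow> 'v mat \<Rightarrow> real) \<Rightarrow> (nat \<Rightarrow> 'v mat set) \<Rightarrow> bool" where
  "bounded_nc nrm D \<longleftrightarrow> (\<exists>M. \<forall>k\<ge>1. \<forall>x\<in>D k. nrm k x \<le> M)"

text \<open>delta_D(a,c)(b), with 1/0 = +infinity and 1/infinity = 0 (ereal inverse).\<close>
definition nc_delta :: "(complex \<Rightarrow> 'v \<Rightarrow> 'v) \<Rightarrow> (nat \<Rightarrow> ('v::ab_group_add) mat set) \<Rightarrow> nat \<Rightarrow> nat
                        \<Rightarrow> 'v mat \<Rightarrow> 'v mat \<Rightarrow> 'v mat \<Rightarrow> ereal" where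
  "nc_delta sc D n m a c b = inverse (Sup {t::ereal. 0 \<le> t \<and>
      (\<forall>s::real. 0 \<le> s \<and> ereal s \<le> t \<longrightarrow>
          blk n m a (mat_scale sc (complex_of_real s) b) c \<in> D (n + m))})"

definition nc_delta_tilde :: "(complex \<Rightarrow> 'v \<Rightarrow> 'v) \<Rightarrow> (nat \<Rightarrow> ('v::ab_group_add) mat set) \<Rightarrow> nat
                        \<Rightarrow> 'v mat \<Rightarrow> 'v mat \<Rightarrow> ereal" where
  "nc_delta_tilde sc D n a c = nc_delta sc D n n a c (mat_diff a c)"

definition nc_dist_tilde :: "(complex \<Rightarrow> 'v \<Rightarrow> 'v) \<Rightarrow> (nat \<Rightarrow> ('v::ab_group_add) mat set) \<Rightarrow> nat
                        \<Rightarrow> 'v mat \<Rightarrow> 'v mat \<Rightarrow> ereal" where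
  "nc_dist_tilde sc D n a c = Inf {(\<Sum>j\<in>{1..N}. nc_delta_tilde sc D n (p (j - 1)) (p j)) | (N::nat) p.
      p 0 = a \<and> p N = c \<and> (\<forall>j\<le>N. p j \<in> D n)}"

definition dist_open :: "'a set \<Rightarrow> ('a \<Rightarrow> 'a \<Rightarrow> ereal) \<Rightarrow> 'a set \<Rightarrow> bool" where
  "dist_open A d U \<longleftrightarrow> U \<subseteq> A \<and> (\<forall>a\<in>U. \<exists>e::real>0. \<forall>b\<in>A. d a b < ereal e \<longrightarrow> b \<in> U)"

end

theory Submission
  imports Defs
begin

(* The two distances are compared uniformly on all of D_n.  Compressing with 0/1 matrices (Ruan's second axiom)
   shows that the upper right block of a 2n x 2n matrix has at most its norm, and that putting X
   in the upper right corner of a zero matrix does not increase the norm.  If ||z|| <= M on D_2n,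
   then [x, s(x - y); 0, y] in D_2n forces s ||x - y|| <= M, i.e. delta~(x, y) >= ||x - y|| / M,
   and the triangle inequality along paths gives d~(a, c) >= ||a - c|| / M.  Conversely, D_2n
   contains a ball of radius eps around a (+) a, and [a, s(a - b); 0, b] lies within
   (s + 1) ||b - a|| of it, so delta~(a, b) <= 1 / T once (T + 1) ||b - a|| < eps; the one-step
   path gives d~(a, b) <= delta~(a, b). *)

lemma is_mat_mat_diff: "is_mat n m x \<Longrightarrow> is_mat n m y \<Longrightarrow> is_mat n m (mat_diff x y)"
  unfolding is_mat_def mat_diff_def by auto

lemma is_mat_blk:
  "is_mat n n a \<Longrightarrow> is_mat n m b \<Longrightarrow> is_mat m m c \<Longrightarrow> is_mat (n + m) (n + m) (blk n m a b c)"
  unfolding is_mat_def blk_def by auto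

lemma cmat_norm_contraction:
  assumes "\<And>\<xi>. (\<Sum>i<m. (cmod (\<Sum>k<n. \<alpha> i k * \<xi> k))\<^sup>2) \<le> (\<Sum>k<n. (cmod (\<xi> k))\<^sup>2)"
  shows "cmat_norm m n \<alpha> \<in> {0..1}"
proof -
  let ?X = "{sqrt (\<Sum>i<m. (cmod (\<Sum>k<n. \<alpha> i k * \<xi> k))\<^sup>2) | \<xi>. (\<Sum>k<n. (cmod (\<xi> k))\<^sup>2) \<le> 1}"
  have zero: "0 \<in> ?X"
    by (rule CollectI, rule exI[of _ "\<lambda>_. 0"]) simp
  have le_one: "x \<le> 1" if "x \<in> ?X" for x
  proof -
    from that obtain \<xi> where x: "x = sqrt (\<Sum>i<m. (cmod (\<Sum>k<n. \<alpha> i k * \<xi> k))\<^sup>2)"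
      and \<xi>: "(\<Sum>k<n. (cmod (\<xi> k))\<^sup>2) \<le> 1" by blast
    have "x \<le> sqrt (\<Sum>k<n. (cmod (\<xi> k))\<^sup>2)" unfolding x using assms by simp
    also have "\<dots> \<le> 1" using \<xi> by simp
    finally show ?thesis .
  qed
  then have "bdd_above ?X" by (rule bdd_aboveI)
  with zero have "0 \<le> Sup ?X" by (rule cSup_upper)
  moreover have "Sup ?X \<le> 1" using zero by (intro cSup_least le_one) blast
  ultimately show ?thesis unfolding cmat_norm_def atLeastAtMost_iff ..
qed

lemma sum_sum_delta:
  fixes N M :: nat
  shows "(\<Sum>k<N. \<Sum>l<M. if k = a \<and> l = b then f k l else 0)
    = (if a < N \<and> b < M then f a b else (0::'a::comm_monoid_add))"
proof -
  have "(\<Sum>l<M. if k = a \<and> l = b then f k l else 0) = (if k = a \<and> b < M then f k b else 0)" for k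
    by (cases "k = a") auto
  then show ?thesis by (cases "b < M") auto
qed

definition block_sel :: "nat \<Rightarrow> nat \<Rightarrow> complex mat" where
  "block_sel n d = (\<lambda>i k. if i < n \<and> k = i + d then 1 else 0)"

definition block_ins :: "nat \<Rightarrow> nat \<Rightarrow> complex mat" where
  "block_ins n d = (\<lambda>i k. if k < n \<and> i = k + d then 1 else 0)"

lemma is_mat_block_sel: "n + d \<le> m \<Longrightarrow> is_mat n m (block_sel n d)"
  and is_mat_block_ins: "n + d \<le> m \<Longrightarrow> is_mat m n (block_ins n d)"
  by (auto simp: is_mat_def block_sel_def block_ins_def)

lemma cmat_norm_block_sel: "n + d \<le> m \<Longrightarrow> cmat_norm n m (block_sel n d) \<in> {0..1}"
proof (rule cmat_norm_contraction)
  fix \<xi> :: "nat \<Rightarrow> complex"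
  assume "n + d \<le> m"
  have row: "(\<Sum>k<m. block_sel n d i k * \<xi> k) = \<xi> (i + d)" if "i < n" for i
  proof -
    have "block_sel n d i k * \<xi> k = (if k = i + d then \<xi> k else 0)" for k
      using that by (simp add: block_sel_def)
    then show ?thesis using that \<open>n + d \<le> m\<close> by (simp add: sum.delta')
  qed
  have "(\<Sum>i<n. (cmod (\<xi> (i + d)))\<^sup>2) = (\<Sum>k\<in>{d..<n + d}. (cmod (\<xi> k))\<^sup>2)"
    by (rule sum.reindex_bij_witness[of _ "\<lambda>k. k - d" "\<lambda>i. i + d"]) auto
  also have "\<dots> \<le> (\<Sum>k<m. (cmod (\<xi> k))\<^sup>2)"
    using \<open>n + d \<le> m\<close> by (intro sum_mono2) auto
  finally show "(\<Sum>i<n. (cmod (\<Sum>k<m. block_sel n d i k * \<xi> k))\<^sup>2) \<le> (\<Sum>k<m. (cmod (\<xi> k))\<^sup>2)"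
    by (simp add: row)
qed

lemma cmat_norm_block_ins: "n + d \<le> m \<Longrightarrow> cmat_norm m n (block_ins n d) \<in> {0..1}"
proof (rule cmat_norm_contraction)
  fix \<xi> :: "nat \<Rightarrow> complex"
  assume "n + d \<le> m"
  have row: "(\<Sum>k<n. block_ins n d i k * \<xi> k) = (if i \<in> {d..<n + d} then \<xi> (i - d) else 0)" for i
  proof -
    have "(\<Sum>k<n. block_ins n d i k * \<xi> k) = (\<Sum>k<n. if d \<le> i \<and> k = i - d then \<xi> k else 0)"
      by (rule sum.cong) (auto simp: block_ins_def)
    then show ?thesis by (cases "d \<le> i") (auto simp: sum.delta')
  qed
  have "(\<Sum>i<m. (cmod (\<Sum>k<n. block_ins n d i k * \<xi> k))\<^sup>2)
      = (\<Sum>i<m. if i \<in> {d..<n + d} then (cmod (\<xi> (i - d)))\<^sup>2 else 0)"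
    by (rule sum.cong) (simp_all add: row)
  also have "\<dots> = (\<Sum>i\<in>{..<m} \<inter> {d..<n + d}. (cmod (\<xi> (i - d)))\<^sup>2)"
    by (rule sum.inter_restrict[symmetric]) simp
  also have "\<dots> = (\<Sum>i\<in>{d..<n + d}. (cmod (\<xi> (i - d)))\<^sup>2)"
    using \<open>n + d \<le> m\<close> by (simp add: Int_absorb1 subset_eq)
  also have "\<dots> = (\<Sum>k<n. (cmod (\<xi> k))\<^sup>2)"
    by (rule sum.reindex_bij_witness[of _ "\<lambda>k. k + d" "\<lambda>i. i - d"]) auto
  finally show "(\<Sum>i<m. (cmod (\<Sum>k<n. block_ins n d i k * \<xi> k))\<^sup>2) \<le> (\<Sum>k<n. (cmod (\<xi> k))\<^sup>2)"
    by simp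
qed

locale op_space =
  fixes sc :: "complex \<Rightarrow> 'v::ab_group_add \<Rightarrow> 'v" and nrm :: "nat \<Rightarrow> 'v mat \<Rightarrow> real"
  assumes operator_space: "operator_space sc nrm"
begin

sublocale vector_space sc
  using operator_space unfolding operator_space_def by blast

lemma nrm_nonneg: "n \<ge> 1 \<Longrightarrow> is_mat n n x \<Longrightarrow> 0 \<le> nrm n x"
  using operator_space unfolding operator_space_def by blast

lemma nrm_eq_zero_iff: "n \<ge> 1 \<Longrightarrow> is_mat n n x \<Longrightarrow> nrm n x = 0 \<longleftrightarrow> x = (\<lambda>_ _. 0)"
  using operator_space unfolding operator_space_def by blast

lemma nrm_zero: "n \<ge> 1 \<Longrightarrow> nrm n (\<lambda>_ _. 0) = 0"
  using nrm_eq_zero_iff[of n "\<lambda>_ _. 0"] by (simp add: is_mat_def)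

lemma nrm_triangle: "n \<ge> 1 \<Longrightarrow> is_mat n n x \<Longrightarrow> is_mat n n y \<Longrightarrow>
    nrm n (\<lambda>i j. x i j + y i j) \<le> nrm n x + nrm n y"
  using operator_space unfolding operator_space_def by blast

lemma nrm_mat_scale: "n \<ge> 1 \<Longrightarrow> is_mat n n x \<Longrightarrow> nrm n (mat_scale sc c x) = cmod c * nrm n x"
  using operator_space unfolding operator_space_def by blast

lemma nrm_dsum: "n \<ge> 1 \<Longrightarrow> m \<ge> 1 \<Longrightarrow> is_mat n n x \<Longrightarrow> is_mat m m y \<Longrightarrow>
    nrm (n + m) (dsum n m x y) = max (nrm n x) (nrm m y)"
  using operator_space unfolding operator_space_def by blast

lemma nrm_mat_sandwich: "n \<ge> 1 \<Longrightarrow> m \<ge> 1 \<Longrightarrow> is_mat m n \<alpha> \<Longrightarrow> is_mat n n x \<Longrightarrow> is_mat n m \<beta> \<Longrightarrow>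
    nrm m (mat_sandwich sc m n \<alpha> x \<beta>) \<le> cmat_norm m n \<alpha> * nrm n x * cmat_norm n m \<beta>"
  using operator_space unfolding operator_space_def by blast

lemma is_mat_mat_scale: "is_mat n m x \<Longrightarrow> is_mat n m (mat_scale sc c x)"
  unfolding is_mat_def mat_scale_def by simp

lemma mat_scale_zero_left: "mat_scale sc 0 x = (\<lambda>_ _. 0)"
  unfolding mat_scale_def by simp

lemma nrm_mat_diff_commute:
  assumes "n \<ge> 1" "is_mat n n x" "is_mat n n y"
  shows "nrm n (mat_diff x y) = nrm n (mat_diff y x)"
proof -
  have "mat_diff x y = mat_scale sc (-1) (mat_diff y x)"
    by (auto simp: mat_diff_def mat_scale_def scale_minus_left)
  then show ?thesis
    using nrm_mat_scale[OF assms(1) is_mat_mat_diff[OF assms(3,2)], of "-1"] by simp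
qed

lemma nrm_mat_diff_triangle:
  assumes "n \<ge> 1" "is_mat n n x" "is_mat n n y" "is_mat n n z"
  shows "nrm n (mat_diff x z) \<le> nrm n (mat_diff x y) + nrm n (mat_diff y z)"
proof -
  have "mat_diff x z = (\<lambda>i j. mat_diff x y i j + mat_diff y z i j)"
    by (auto simp: mat_diff_def)
  then show ?thesis
    using nrm_triangle[OF assms(1) is_mat_mat_diff[OF assms(2,3)] is_mat_mat_diff[OF assms(3,4)]]
    by simp
qed

lemma nrm_mat_sandwich_contraction:
  assumes "n \<ge> 1" "m \<ge> 1" "is_mat m n \<alpha>" "is_mat n n x" "is_mat n m \<beta>"
    and "cmat_norm m n \<alpha> \<in> {0..1}" "cmat_norm n m \<beta> \<in> {0..1}"
  shows "nrm m (mat_sandwich sc m n \<alpha> x \<beta>) \<le> nrm n x"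
proof -
  have "nrm m (mat_sandwich sc m n \<alpha> x \<beta>) \<le> cmat_norm m n \<alpha> * nrm n x * cmat_norm n m \<beta>"
    using nrm_mat_sandwich assms(1-5) .
  also have "\<dots> \<le> 1 * nrm n x * 1"
    using assms(6,7) nrm_nonneg[OF assms(1,4)] by (intro mult_mono) (auto intro: mult_le_one)
  finally show ?thesis by simp
qed

lemma sandwich_upper_right_corner:
  assumes "is_mat n n X"
  shows "mat_sandwich sc (n + n) n (block_ins n 0) X (block_sel n n) = blk n n (\<lambda>_ _. 0) X (\<lambda>_ _. 0)"
proof (intro ext)
  fix i j
  let ?C = "i < n \<and> n \<le> j \<and> j - n < n"
  have "(\<Sum>k<n. \<Sum>l<n. sc (block_ins n 0 i k * block_sel n n l j) (X k l))
      = (\<Sum>k<n. \<Sum>l<n. if k = i \<and> l = j - n then (if ?C then X k l else 0) else 0)"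
    by (intro sum.cong refl) (auto simp: block_ins_def block_sel_def)
  also have "\<dots> = (if ?C then X i (j - n) else 0)"
    by (auto simp: sum_sum_delta)
  finally show "mat_sandwich sc (n + n) n (block_ins n 0) X (block_sel n n) i j
      = blk n n (\<lambda>_ _. 0) X (\<lambda>_ _. 0) i j"
    using assms by (auto simp: mat_sandwich_def blk_def is_mat_def)
qed

lemma sandwich_upper_right_block:
  assumes "is_mat n n X"
  shows "mat_sandwich sc n (n + n) (block_sel n 0) (blk n n x X y) (block_ins n n) = X"
proof (intro ext)
  fix i j
  let ?Z = "blk n n x X y"
  have "(\<Sum>k<n + n. \<Sum>l<n + n. sc (block_sel n 0 i k * block_ins n n l j) (?Z k l))
      = (\<Sum>k<n + n. \<Sum>l<n + n. if k = i \<and> l = j + n then (if i < n \<and> j < n then ?Z k l else 0) else 0)"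
    by (intro sum.cong refl) (auto simp: block_ins_def block_sel_def)
  also have "\<dots> = (if i < n \<and> j < n then X i j else 0)"
    by (auto simp: sum_sum_delta blk_def)
  finally show "mat_sandwich sc n (n + n) (block_sel n 0) ?Z (block_ins n n) i j = X i j"
    using assms by (auto simp: mat_sandwich_def is_mat_def)
qed

lemma nrm_upper_right_corner_le:
  assumes "n \<ge> 1" "is_mat n n X"
  shows "nrm (n + n) (blk n n (\<lambda>_ _. 0) X (\<lambda>_ _. 0)) \<le> nrm n X"
proof -
  have "nrm (n + n) (mat_sandwich sc (n + n) n (block_ins n 0) X (block_sel n n)) \<le> nrm n X"
    using assms by (intro nrm_mat_sandwich_contraction is_mat_block_ins is_mat_block_sel
        cmat_norm_block_ins cmat_norm_block_sel) auto
  then show ?thesis by (simp add: sandwich_upper_right_corner assms(2))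
qed

lemma nrm_le_upper_right_block:
  assumes "n \<ge> 1" "is_mat n n x" "is_mat n n X" "is_mat n n y"
  shows "nrm n X \<le> nrm (n + n) (blk n n x X y)"
proof -
  have "nrm n (mat_sandwich sc n (n + n) (block_sel n 0) (blk n n x X y) (block_ins n n))
      \<le> nrm (n + n) (blk n n x X y)"
    using assms by (intro nrm_mat_sandwich_contraction is_mat_block_ins is_mat_block_sel is_mat_blk
        cmat_norm_block_ins cmat_norm_block_sel) auto
  then show ?thesis by (simp add: sandwich_upper_right_block assms(3))
qed

end

definition admissible_scales ::
    "(complex \<Rightarrow> 'v \<Rightarrow> 'v) \<Rightarrow> (nat \<Rightarrow> ('v::ab_group_add) mat set) \<Rightarrow> nat \<Rightarrow> nat
      \<Rightarrow> 'v mat \<Rightarrow> 'v mat \<Rightarrow> 'v mat \<Rightarrow> ereal set" where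
  "admissible_scales sc D n m a c b = {t. 0 \<le> t \<and> (\<forall>s::real. 0 \<le> s \<and> ereal s \<le> t \<longrightarrow>
      blk n m a (mat_scale sc (complex_of_real s) b) c \<in> D (n + m))}"

lemma nc_delta_eq: "nc_delta sc D n m a c b = inverse (Sup (admissible_scales sc D n m a c b))"
  unfolding nc_delta_def admissible_scales_def ..

lemma nc_delta_nonneg: "0 \<le> nc_delta sc D n m a c b"
proof -
  let ?S = "admissible_scales sc D n m a c b"
  have "0 \<le> Sup ?S \<or> Sup ?S = -\<infinity>"
  proof (cases "?S = {}")
    case False
    then obtain t where "t \<in> ?S" by blast
    then show ?thesis by (auto simp: admissible_scales_def intro: Sup_upper2)
  qed (simp add: bot_ereal_def)
  then show ?thesis
    unfolding nc_delta_eq by (simp add: ereal_inverse_nonneg_iff)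
qed

lemma nc_delta_le_inverse:
  assumes "0 < T"
    and "\<forall>s. 0 \<le> s \<and> s \<le> T \<longrightarrow> blk n m a (mat_scale sc (complex_of_real s) b) c \<in> D (n + m)"
  shows "nc_delta sc D n m a c b \<le> ereal (1 / T)"
proof -
  let ?S = "admissible_scales sc D n m a c b"
  have "ereal T \<in> ?S" using assms by (auto simp: admissible_scales_def)
  then have "inverse (Sup ?S) \<le> inverse (ereal T)"
    by (intro ereal_inverse_antimono Sup_upper) (use assms(1) in auto)
  then show ?thesis
    using assms(1) unfolding nc_delta_eq by (simp add: divide_inverse)
qed

lemma nc_delta_ge_inverse:
  assumes "0 < K" and "blk n m a (mat_scale sc 0 b) c \<in> D (n + m)"
    and "\<forall>s. 0 \<le> s \<and> blk n m a (mat_scale sc (complex_of_real s) b) c \<in> D (n + m) \<longrightarrow> s \<le> K"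
  shows "ereal (1 / K) \<le> nc_delta sc D n m a c b"
proof -
  let ?S = "admissible_scales sc D n m a c b"
  have "0 \<in> ?S" using assms(2) by (auto simp: admissible_scales_def zero_ereal_def)
  have "Sup ?S \<le> ereal K"
  proof (rule Sup_least)
    fix t assume "t \<in> ?S"
    show "t \<le> ereal K"
    proof (rule ccontr)
      assume "\<not> t \<le> ereal K"
      then obtain s where "ereal K < ereal s" "ereal s < t" using ereal_dense2 by (meson not_le)
      with \<open>t \<in> ?S\<close> \<open>0 < K\<close> have "K < s" "0 \<le> s"
        and "blk n m a (mat_scale sc (complex_of_real s) b) c \<in> D (n + m)"
        by (auto simp: admissible_scales_def)
      with assms(3) show False by force
    qed
  qed
  then have "inverse (ereal K) \<le> inverse (Sup ?S)"
    by (intro ereal_inverse_antimono Sup_upper2[OF \<open>0 \<in> ?S\<close>]) simp_all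
  then show ?thesis
    using assms(1) unfolding nc_delta_eq by (simp add: divide_inverse)
qed

lemma nc_dist_tilde_le_nc_delta_tilde:
  assumes "a \<in> D n" "b \<in> D n"
  shows "nc_dist_tilde sc D n a b \<le> nc_delta_tilde sc D n a b"
proof -
  let ?p = "\<lambda>j::nat. if j = 0 then a else b"
  have "nc_dist_tilde sc D n a b \<le> (\<Sum>j\<in>{1..1}. nc_delta_tilde sc D n (?p (j - 1)) (?p j))"
    unfolding nc_dist_tilde_def using assms by (intro Inf_lower CollectI exI[of _ 1] exI[of _ ?p]) auto
  then show ?thesis by simp
qed

lemma dist_open_finer:
  assumes "\<forall>a\<in>A. \<forall>e>0. \<exists>e'>0. \<forall>b\<in>A. d' a b < ereal e' \<longrightarrow> d a b < ereal e"
    and "dist_open A d U"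
  shows "dist_open A d' U"
  unfolding dist_open_def
proof (intro conjI ballI)
  show "U \<subseteq> A" using assms(2) by (simp add: dist_open_def)
  fix a assume "a \<in> U"
  then obtain e where "e > 0" and "\<forall>b\<in>A. d a b < ereal e \<longrightarrow> b \<in> U"
    using assms(2) by (auto simp: dist_open_def)
  with assms(1) \<open>U \<subseteq> A\<close> \<open>a \<in> U\<close> show "\<exists>e>0. \<forall>b\<in>A. d' a b < ereal e \<longrightarrow> b \<in> U"
    by (meson subsetD)
qed

lemma dist_open_eq_if_nested_balls:
  assumes "\<forall>a\<in>A. \<forall>e>0. \<exists>e'>0. \<forall>b\<in>A. d' a b < ereal e' \<longrightarrow> d a b < ereal e"
    and "\<forall>a\<in>A. \<forall>e>0. \<exists>e'>0. \<forall>b\<in>A. d a b < ereal e' \<longrightarrow> d' a b < ereal e"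
  shows "dist_open A d U \<longleftrightarrow> dist_open A d' U"
  using dist_open_finer[OF assms(1)] dist_open_finer[OF assms(2)] by blast

lemma bounded_ncE:
  assumes "bounded_nc nrm D" "k \<ge> 1"
  obtains M where "0 < M" "\<forall>z\<in>D k. nrm k z \<le> M"
proof -
  obtain M0 where "\<forall>k\<ge>1. \<forall>x\<in>D k. nrm k x \<le> M0"
    using assms(1) unfolding bounded_nc_def by blast
  with assms(2) show ?thesis by (intro that[of "max M0 1"]) (simp_all add: le_max_iff_disj)
qed

locale nc_dom = op_space sc nrm
  for sc :: "complex \<Rightarrow> 'v::ab_group_add \<Rightarrow> 'v" and nrm :: "nat \<Rightarrow> 'v mat \<Rightarrow> real" +
  fixes D :: "nat \<Rightarrow> 'v mat set"
  assumes nc_domain: "nc_domain nrm D"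
begin

lemma is_mat_if_mem: "x \<in> D n \<Longrightarrow> is_mat n n x"
  and dsum_mem: "n \<ge> 1 \<Longrightarrow> m \<ge> 1 \<Longrightarrow> a \<in> D n \<Longrightarrow> c \<in> D m \<Longrightarrow> dsum n m a c \<in> D (n + m)"
  and open_ball_subset: "n \<ge> 1 \<Longrightarrow> x \<in> D n \<Longrightarrow>
    \<exists>e>0. \<forall>y. is_mat n n y \<and> nrm n (mat_diff y x) < e \<longrightarrow> y \<in> D n"
  using nc_domain unfolding nc_domain_def by blast+

context
  fixes n :: nat and M :: real
  assumes n: "n \<ge> 1" and M: "0 < M" and bounded: "\<forall>z\<in>D (n + n). nrm (n + n) z \<le> M"
begin

lemma nrm_div_le_nc_delta_tilde:
  assumes x: "x \<in> D n" and y: "y \<in> D n"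
  shows "ereal (nrm n (mat_diff x y) / M) \<le> nc_delta_tilde sc D n x y"
proof -
  define \<delta> where "\<delta> = nrm n (mat_diff x y)"
  have xy: "is_mat n n x" "is_mat n n y" "is_mat n n (mat_diff x y)"
    using is_mat_if_mem[OF x] is_mat_if_mem[OF y] is_mat_mat_diff by blast+
  show ?thesis
  proof (cases "\<delta> = 0")
    case True
    then show ?thesis
      by (simp add: \<delta>_def nc_delta_tilde_def nc_delta_nonneg zero_ereal_def[symmetric])
  next
    case False
    with nrm_nonneg[OF n xy(3)] have "0 < \<delta>" by (simp add: \<delta>_def)
    have "ereal (1 / (M / \<delta>)) \<le> nc_delta sc D n n x y (mat_diff x y)"
    proof (rule nc_delta_ge_inverse)
      show "0 < M / \<delta>" using M \<open>0 < \<delta>\<close> by simp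
      show "blk n n x (mat_scale sc 0 (mat_diff x y)) y \<in> D (n + n)"
        using dsum_mem[OF n n x y] by (simp add: mat_scale_zero_left dsum_def)
      show "\<forall>s. 0 \<le> s \<and> blk n n x (mat_scale sc (complex_of_real s) (mat_diff x y)) y \<in> D (n + n)
          \<longrightarrow> s \<le> M / \<delta>"
      proof (intro allI impI)
        fix s :: real
        let ?X = "mat_scale sc (complex_of_real s) (mat_diff x y)"
        assume s: "0 \<le> s \<and> blk n n x ?X y \<in> D (n + n)"
        have "s * \<delta> = nrm n ?X" using nrm_mat_scale[OF n xy(3)] s by (simp add: \<delta>_def)
        also have "\<dots> \<le> nrm (n + n) (blk n n x ?X y)"
          by (rule nrm_le_upper_right_block[OF n xy(1) is_mat_mat_scale[OF xy(3)] xy(2)])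
        also have "\<dots> \<le> M" using bounded s by blast
        finally show "s \<le> M / \<delta>" using \<open>0 < \<delta>\<close> by (simp add: field_simps)
      qed
    qed
    then show ?thesis using M \<open>0 < \<delta>\<close> by (simp add: nc_delta_tilde_def \<delta>_def)
  qed
qed

lemma nrm_div_le_path_sum:
  fixes N :: nat
  assumes "\<forall>j\<le>N. p j \<in> D n"
  shows "ereal (nrm n (mat_diff (p 0) (p N)) / M)
    \<le> (\<Sum>j\<in>{1..N}. nc_delta_tilde sc D n (p (j - 1)) (p j))"
  using assms
proof (induction N)
  case 0
  have "mat_diff (p 0) (p 0) = (\<lambda>_ _. 0)" by (auto simp: mat_diff_def)
  then show ?case using nrm_zero[OF n] by simp
next
  case (Suc N)
  have p: "is_mat n n (p j)" if "j \<le> Suc N" for j using Suc.prems that is_mat_if_mem by blast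
  have "nrm n (mat_diff (p 0) (p (Suc N))) / M
      \<le> nrm n (mat_diff (p 0) (p N)) / M + nrm n (mat_diff (p N) (p (Suc N))) / M"
    using nrm_mat_diff_triangle[OF n p p p, of 0 N "Suc N"] M
    by (simp add: add_divide_distrib[symmetric] divide_right_mono)
  then have "ereal (nrm n (mat_diff (p 0) (p (Suc N))) / M)
      \<le> ereal (nrm n (mat_diff (p 0) (p N)) / M) + ereal (nrm n (mat_diff (p N) (p (Suc N))) / M)"
    by simp
  also have "\<dots> \<le> (\<Sum>j\<in>{1..N}. nc_delta_tilde sc D n (p (j - 1)) (p j))
      + nc_delta_tilde sc D n (p N) (p (Suc N))"
    using Suc by (intro add_mono nrm_div_le_nc_delta_tilde) auto
  also have "\<dots> = (\<Sum>j\<in>{1..Suc N}. nc_delta_tilde sc D n (p (j - 1)) (p j))"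
    by (simp add: sum.cl_ivl_Suc)
  finally show ?case .
qed

lemma nrm_div_le_nc_dist_tilde: "ereal (nrm n (mat_diff a c) / M) \<le> nc_dist_tilde sc D n a c"
  unfolding nc_dist_tilde_def using nrm_div_le_path_sum by (auto intro!: Inf_greatest)

lemma nrm_lt_if_nc_dist_tilde_lt:
  assumes a: "a \<in> D n" and b: "b \<in> D n" and "nc_dist_tilde sc D n a b < ereal (e / M)"
  shows "nrm n (mat_diff b a) < e"
proof -
  have "ereal (nrm n (mat_diff a b) / M) < ereal (e / M)"
    using nrm_div_le_nc_dist_tilde assms(3) by (rule le_less_trans)
  then have "nrm n (mat_diff a b) < e" using M by (simp add: divide_less_cancel)
  then show ?thesis
    using nrm_mat_diff_commute[OF n is_mat_if_mem[OF a] is_mat_if_mem[OF b]] by simp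
qed

end

lemma nc_delta_tilde_le_inverse_near:
  assumes n: "n \<ge> 1" and a: "a \<in> D n" and b: "b \<in> D n" and "0 < T"
    and ball: "\<forall>y. is_mat (n + n) (n + n) y \<and> nrm (n + n) (mat_diff y (dsum n n a a)) < \<epsilon>
      \<longrightarrow> y \<in> D (n + n)"
    and close: "(T + 1) * nrm n (mat_diff b a) < \<epsilon>"
  shows "nc_delta_tilde sc D n a b \<le> ereal (1 / T)"
  unfolding nc_delta_tilde_def
proof (rule nc_delta_le_inverse[OF \<open>0 < T\<close>], intro allI impI)
  fix s :: real assume s: "0 \<le> s \<and> s \<le> T"
  let ?X = "mat_scale sc (complex_of_real s) (mat_diff a b)"
  let ?O = "\<lambda>_ _. 0 :: 'v"
  have ab: "is_mat n n a" "is_mat n n b" using is_mat_if_mem a b by blast+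
  have X: "is_mat n n ?X" using is_mat_mat_scale is_mat_mat_diff[OF ab] by blast
  have ba: "is_mat n n (mat_diff b a)" using is_mat_mat_diff[OF ab(2,1)] .
  have O: "is_mat n n ?O" by (simp add: is_mat_def)
  define \<delta> where "\<delta> = nrm n (mat_diff b a)"
  have "0 \<le> \<delta>" using nrm_nonneg[OF n ba] by (simp add: \<delta>_def)
  have "mat_diff (blk n n a ?X b) (dsum n n a a) = (\<lambda>i j. blk n n ?O ?X ?O i j + dsum n n ?O (mat_diff b a) i j)"
    by (intro ext) (auto simp: mat_diff_def blk_def dsum_def)
  then have "nrm (n + n) (mat_diff (blk n n a ?X b) (dsum n n a a))
      \<le> nrm (n + n) (blk n n ?O ?X ?O) + nrm (n + n) (dsum n n ?O (mat_diff b a))"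
    using nrm_triangle[of "n + n"] n is_mat_blk[OF O X O] is_mat_blk[OF O O ba]
    by (simp add: dsum_def)
  also have "\<dots> \<le> nrm n ?X + max (nrm n ?O) \<delta>"
    using nrm_upper_right_corner_le[OF n X] nrm_dsum[OF n n O ba] by (simp add: \<delta>_def)
  also have "\<dots> = s * \<delta> + \<delta>"
    using nrm_mat_scale[OF n is_mat_mat_diff[OF ab]] nrm_zero[OF n] nrm_mat_diff_commute[OF n ab] s \<open>0 \<le> \<delta>\<close>
    by (simp add: \<delta>_def)
  also have "\<dots> \<le> (T + 1) * \<delta>"
    using mult_right_mono[of s T \<delta>] s \<open>0 \<le> \<delta>\<close> by (simp add: distrib_right)
  also have "\<dots> < \<epsilon>" using close by (simp add: \<delta>_def)
  finally show "blk n n a ?X b \<in> D (n + n)"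
    using ball is_mat_blk[OF ab(1) X ab(2)] by blast
qed

lemma nc_dist_tilde_small_near:
  assumes n: "n \<ge> 1" and a: "a \<in> D n" and "0 < e"
  shows "\<exists>e'>0. \<forall>b\<in>D n. nrm n (mat_diff b a) < e' \<longrightarrow> nc_dist_tilde sc D n a b < ereal e"
proof -
  obtain \<epsilon> where "0 < \<epsilon>" and ball: "\<forall>y. is_mat (n + n) (n + n) y
      \<and> nrm (n + n) (mat_diff y (dsum n n a a)) < \<epsilon> \<longrightarrow> y \<in> D (n + n)"
    using open_ball_subset[of "n + n"] dsum_mem[OF n n a a] n by auto
  define T where "T = 2 / e"
  have "0 < T" using \<open>0 < e\<close> by (simp add: T_def)
  show ?thesis
  proof (intro exI[of _ "\<epsilon> / (T + 1)"] conjI ballI impI)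
    show "0 < \<epsilon> / (T + 1)" using \<open>0 < \<epsilon>\<close> \<open>0 < T\<close> by simp
    fix b assume b: "b \<in> D n" and "nrm n (mat_diff b a) < \<epsilon> / (T + 1)"
    then have "(T + 1) * nrm n (mat_diff b a) < \<epsilon>" using \<open>0 < T\<close> by (simp add: field_simps)
    then have "nc_delta_tilde sc D n a b \<le> ereal (e / 2)"
      using nc_delta_tilde_le_inverse_near[OF n a b \<open>0 < T\<close> ball] by (simp add: T_def)
    with nc_dist_tilde_le_nc_delta_tilde[where sc = sc and D = D and n = n, OF a b]
    have "nc_dist_tilde sc D n a b \<le> ereal (e / 2)" by (rule order.trans)
    also have "\<dots> < ereal e" using \<open>0 < e\<close> by simp
    finally show "nc_dist_tilde sc D n a b < ereal e" .
  qed
qed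

end

theorem proposition5p5:
  fixes sc :: "complex \<Rightarrow> 'v::ab_group_add \<Rightarrow> 'v"
    and nrm :: "nat \<Rightarrow> 'v mat \<Rightarrow> real"
    and D :: "nat \<Rightarrow> 'v mat set"
    and n :: nat
    and A :: "'v mat set"
  assumes "operator_space sc nrm"
    and "nc_domain nrm D"
    and "bounded_nc nrm D"
    and "n \<ge> 1"
    and "A \<subseteq> D n"
    and "\<exists>r>0. \<forall>a\<in>A. \<forall>y. is_mat n n y \<and> y \<notin> D n \<longrightarrow> r \<le> nrm n (mat_diff y a)"
  shows "\<forall>U. dist_open A (nc_dist_tilde sc D n) U
             \<longleftrightarrow> dist_open A (\<lambda>a b. ereal (nrm n (mat_diff b a))) U"
proof -
  interpret nc_dom sc nrm D
    by unfold_locales (rule assms(1), rule assms(2))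
  from assms(4) have "n + n \<ge> 1" by simp
  then obtain M where M: "0 < M" and bounded: "\<forall>z\<in>D (n + n). nrm (n + n) z \<le> M"
    by (rule bounded_ncE[OF assms(3)])
  have norm_ball_in_dist_ball: "\<forall>a\<in>A. \<forall>e>0. \<exists>e'>0. \<forall>b\<in>A.
      ereal (nrm n (mat_diff b a)) < ereal e' \<longrightarrow> nc_dist_tilde sc D n a b < ereal e"
  proof (intro ballI allI impI)
    fix a and e :: real assume "a \<in> A" "0 < e"
    then obtain e' where "0 < e'"
      and "\<forall>b\<in>D n. nrm n (mat_diff b a) < e' \<longrightarrow> nc_dist_tilde sc D n a b < ereal e"
      using nc_dist_tilde_small_near[OF assms(4)] assms(5) by blast
    with assms(5) show "\<exists>e'>0. \<forall>b\<in>A.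
        ereal (nrm n (mat_diff b a)) < ereal e' \<longrightarrow> nc_dist_tilde sc D n a b < ereal e"
      by auto
  qed
  have dist_ball_in_norm_ball: "\<forall>a\<in>A. \<forall>e>0. \<exists>e'>0. \<forall>b\<in>A.
      nc_dist_tilde sc D n a b < ereal e' \<longrightarrow> ereal (nrm n (mat_diff b a)) < ereal e"
    using assms(5) M nrm_lt_if_nc_dist_tilde_lt[OF assms(4) M bounded]
    by (intro ballI allI impI, rule_tac x = "e / M" in exI) (auto simp: subset_iff)
  show ?thesis
    using dist_open_eq_if_nested_balls[OF norm_ball_in_dist_ball dist_ball_in_norm_ball] by blast
qed

end
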